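(* Let $0\le t\le 1$ and $u>0$, and let $D=\mathrm{DASEP}(3,3,2)$ with stationary distribution $\mathrm{Pd}$. Suppose that for every partition $\lambda$ with $\lambda_1\le 3$ and exactly $2$ nonzero parts, and all $\mu,\nu\in S_3(\lambda)$, we have $$\frac{\Pr_\lambda(\mu)}{\Pr_\lambda(\nu)}=\frac{\mathrm{Pd}(\mu)}{\mathrm{Pd}(\nu)}.$$ Then $t=1$.
   Context: For a partition $\lambda=(\lambda_1\ge\dots\ge\lambda_n\ge 0)$ of nonnegative integers, $S_n(\lambda)$ denotes the set of all distinct rearrangements of $\lambda$, viewed as words $(\mu_1,\dots,\mu_n)$ whose positions $1,\dots,n$ lie on a circle. Fix $0\le t\le 1$. ASEP($\lambda$) is the Markov chain on $S_n(\lambda)$ with transition probabilities $P_{\mu,\nu}$ defined as follows. If $\mu$ has entries $i\ne j$ in adjacent positions $k,k+1$ ($1\le k\le n-1$) and $\nu$ is obtained from $\mu$ by swapping them, then $P_{\mu,\nu}=t/n$ if $i>j$ and $P_{\mu,\nu}=1/n$ if $i<j$. If $\mu=(i,\mu_2,\dots,\mu_{n-1},j)$ with $i\ne j$ and $\nu=(j,\mu_2,\dots,\mu_{n-1},i)$, then $P_{\mu,\nu}=t/n$ if $j>i$ and $P_{\mu,\nu}=1/n$ if $i>j$. All other off-diagonal transition probabilities are $0$, and the diagonal entries are chosen so that each row sums to $1$. $\Pr_\lambda$ denotes the stationary distribution of ASEP($\lambda$). Fix also $u>0$. For positive integers $n,p,q$ with $n>q$, DASEP$(n,p,q)$ is the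 Markov chain on the set of words in $\{0,1,\dots,p\}^n$ with exactly $q$ nonzero entries (equivalently, the union of $S_n(\lambda)$ over partitions $\lambda$ with $\lambda_1\le p$ and exactly $q$ nonzero parts). Its transition probabilities are as follows. The two swap rules of ASEP apply, with probabilities $t/(3n)$ and $1/(3n)$ in place of $t/n$ and $1/n$. Replacing a single entry $i$ with $1\le i\le p-1$ by $i+1$ has probability $u/(3n)$. Replacing a single entry $i+1$ with $i\ge 1$ by $i$ has probability $1/(3n)$. All other off-diagonal transition probabilities are $0$, and the diagonal entries make each row sum to $1$. $\mathrm{Pd}$ denotes the stationary distribution of the DASEP. *)

theory Defs
  imports Complex_Main "HOL-Library.Multiset"
begin

(* Words are lists of naturals; positions 1..n of the paper are list indices 0..n-1. *)

definition chain_P :: "'a set \<Rightarrow> ('a \<Rightarrow> 'a \<Rightarrow> real) \<Rightarrow> 'a \<Rightarrow> 'a \<Rightarrow> real" where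
  "chain_P S R x y = (if x = y then 1 - (\<Sum>z\<in>S - {x}. R x z) else R x y)"

definition stationary :: "'a set \<Rightarrow> ('a \<Rightarrow> 'a \<Rightarrow> real) \<Rightarrow> ('a \<Rightarrow> real) \<Rightarrow> bool" where
  "stationary S R w \<longleftrightarrow>
     (\<forall>x\<in>S. 0 \<le> w x) \<and> (\<Sum>x\<in>S. w x) = 1 \<and>
     (\<forall>y\<in>S. (\<Sum>x\<in>S. w x * chain_P S R x y) = w y)"

text \<open>Swap rule of the ASEP with rates a (for the "t" moves) and b (for the "1" moves):
  adjacent positions k,k+1 (0-based k < n-1) and the wrap-around pair (first,last).\<close>
definition swap_rate :: "nat \<Rightarrow> real \<Rightarrow> real \<Rightarrow> nat list \<Rightarrow> nat list \<Rightarrow> real" where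
  "swap_rate n a b mu nu =
     (\<Sum>k<n-1. if mu ! k \<noteq> mu ! (k+1) \<and> nu = mu[k := mu ! (k+1), k+1 := mu ! k]
               then (if mu ! k > mu ! (k+1) then a else b) else 0)
     + (if mu ! 0 \<noteq> mu ! (n-1) \<and> nu = mu[0 := mu ! (n-1), n-1 := mu ! 0]
        then (if mu ! (n-1) > mu ! 0 then a else b) else 0)"

definition S_n :: "nat \<Rightarrow> nat list \<Rightarrow> nat list set" where
  "S_n n lam = {mu. length mu = n \<and> mset mu = mset lam}"

definition is_partition :: "nat \<Rightarrow> nat list \<Rightarrow> bool" where
  "is_partition n lam \<longleftrightarrow> length lam = n \<and> sorted_wrt (\<ge>) lam"

definition num_nonzero :: "nat list \<Rightarrow> nat" where
  "num_nonzero mu = length (filter (\<lambda>x. x \<noteq> 0) mu)"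

definition ASEP_rate :: "real \<Rightarrow> nat \<Rightarrow> nat list \<Rightarrow> nat list \<Rightarrow> real" where
  "ASEP_rate t n mu nu = (if mu = nu then 0 else swap_rate n (t / real n) (1 / real n) mu nu)"

definition DASEP_states :: "nat \<Rightarrow> nat \<Rightarrow> nat \<Rightarrow> nat list set" where
  "DASEP_states n p q = {mu. length mu = n \<and> set mu \<subseteq> {0..p} \<and> num_nonzero mu = q}"

definition DASEP_rate :: "real \<Rightarrow> real \<Rightarrow> nat \<Rightarrow> nat \<Rightarrow> nat list \<Rightarrow> nat list \<Rightarrow> real" where
  "DASEP_rate t u n p mu nu =
    (if mu = nu then 0 else
       swap_rate n (t / (3 * real n)) (1 / (3 * real n)) mu nu
     + (\<Sum>k<n. (if 1 \<le> mu ! k \<and> mu ! k \<le> p - 1 \<and> nu = mu[k := mu ! k + 1]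
                then u / (3 * real n) else 0)
             + (if 2 \<le> mu ! k \<and> nu = mu[k := mu ! k - 1]
                then 1 / (3 * real n) else 0)))"

end

theory Submission
  imports Defs
begin

text \<open>
  By the ratio hypothesis, Pd restricted to each S_3(lambda) is proportional to Pr_lambda, so it
  satisfies the ASEP balance equations there. The swap part of the DASEP rates is one third of the
  ASEP rates and never leaves S_3(lambda), so subtracting leaves the balance equations of the
  level-changing moves alone. With the position of the zero entry fixed, these are the balance
  equations of a product of two birth-death chains on {1,2,3}^2, which force Pd to be invariant
  under exchanging the two nonzero entries. For weights with this symmetry the ASEP balance
  equations on S_3(2,1,0) reduce to (1 - t) Pd(mu) = 0; so t \<noteq> 1 would make Pd, and with it the
  probability distribution Pr_(2,1,0), vanish on S_3(2,1,0).
\<close>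

definition global_balance :: "'a set \<Rightarrow> ('a \<Rightarrow> 'a \<Rightarrow> real) \<Rightarrow> ('a \<Rightarrow> real) \<Rightarrow> 'a \<Rightarrow> bool" where
  "global_balance S R w y \<longleftrightarrow> (\<Sum>x\<in>S - {y}. w x * R x y) = w y * (\<Sum>z\<in>S - {y}. R y z)"

lemma stationary_imp_global_balance:
  assumes "stationary S R w" "finite S" "y \<in> S"
  shows "global_balance S R w y"
proof -
  have "(\<Sum>x\<in>S. w x * chain_P S R x y) =
      (\<Sum>x\<in>S - {y}. w x * R x y) + w y - w y * (\<Sum>z\<in>S - {y}. R y z)"
    using assms(2,3) by (simp add: sum.remove[of S y] chain_P_def algebra_simps)
  moreover have "(\<Sum>x\<in>S. w x * chain_P S R x y) = w y"
    using assms(1,3) by (simp add: stationary_def)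
  ultimately show ?thesis
    by (simp add: global_balance_def)
qed

lemma global_balance_scale_weight:
  assumes "global_balance S R w y"
  shows "global_balance S R (\<lambda>x. c * w x) y"
  using assms by (simp add: global_balance_def sum_distrib_left[symmetric] mult.assoc)

lemma global_balance_scale_rate:
  assumes "global_balance S R w y"
  shows "global_balance S (\<lambda>x z. c * R x z) w y"
  using assms
  by (simp add: global_balance_def sum_distrib_left[symmetric] algebra_simps)

lemma global_balance_restrict:
  assumes "finite D" "T \<subseteq> D" "y \<in> T"
    and split: "\<And>x z. R x z = R\<^sub>1 x z + R\<^sub>2 x z"
    and outside: "\<And>x. x \<in> D - T \<Longrightarrow> R\<^sub>1 x y = 0 \<and> R\<^sub>1 y x = 0"
    and "global_balance D R w y" "global_balance T R\<^sub>1 w y"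
  shows "global_balance D R\<^sub>2 w y"
proof -
  have in_flow: "(\<Sum>x\<in>D - {y}. w x * R\<^sub>1 x y) = (\<Sum>x\<in>T - {y}. w x * R\<^sub>1 x y)"
    using assms(1,2) outside by (intro sum.mono_neutral_right) auto
  have out_flow: "(\<Sum>z\<in>D - {y}. R\<^sub>1 y z) = (\<Sum>z\<in>T - {y}. R\<^sub>1 y z)"
    using assms(1,2) outside by (intro sum.mono_neutral_right) auto
  have in_split: "(\<Sum>x\<in>D - {y}. w x * R x y)
      = (\<Sum>x\<in>T - {y}. w x * R\<^sub>1 x y) + (\<Sum>x\<in>D - {y}. w x * R\<^sub>2 x y)"
    by (simp only: split distrib_left sum.distrib in_flow)
  have "w y * (\<Sum>z\<in>D - {y}. R y z)
      = w y * (\<Sum>z\<in>T - {y}. R\<^sub>1 y z) + w y * (\<Sum>z\<in>D - {y}. R\<^sub>2 y z)"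
    by (simp only: split sum.distrib out_flow distrib_left)
  with in_split assms(6,7) show ?thesis
    unfolding global_balance_def by linarith
qed

lemma stationary_imp_nonzero:
  assumes "stationary S R w"
  obtains y where "y \<in> S" "w y \<noteq> 0"
  using assms unfolding stationary_def by (metis sum.neutral zero_neq_one)

lemma stationary_ratios_imp_proportional:
  assumes "stationary S R P" and ratios: "\<forall>\<mu>\<in>S. \<forall>\<nu>\<in>S. P \<mu> / P \<nu> = Q \<mu> / Q \<nu>"
  obtains c where "c \<noteq> 0" "\<And>x. x \<in> S \<Longrightarrow> Q x = c * P x"
proof -
  obtain y where y: "y \<in> S" "P y \<noteq> 0"
    using assms(1) by (rule stationary_imp_nonzero)
  have "Q y / Q y = 1"
    using ratios y by (metis divide_self)
  then have Qy: "Q y \<noteq> 0" by auto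
  show ?thesis
  proof
    show "Q y / P y \<noteq> 0" using y Qy by simp
    show "Q x = Q y / P y * P x" if "x \<in> S" for x
    proof -
      have "P x / P y = Q x / Q y"
        using ratios that y(1) by blast
      then show ?thesis
        using y(2) Qy by (simp add: field_simps)
    qed
  qed
qed

lemma stationary_ratios_imp_nonvanishing:
  assumes "stationary S R P" "\<forall>\<mu>\<in>S. \<forall>\<nu>\<in>S. P \<mu> / P \<nu> = Q \<mu> / Q \<nu>"
  obtains x where "x \<in> S" "Q x \<noteq> 0"
proof -
  obtain c where "c \<noteq> 0" and c: "\<And>x. x \<in> S \<Longrightarrow> Q x = c * P x"
    using stationary_ratios_imp_proportional[OF assms] by blast
  obtain x where "x \<in> S" "P x \<noteq> 0"
    using assms(1) by (rule stationary_imp_nonzero)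
  with \<open>c \<noteq> 0\<close> c show ?thesis
    using that by auto
qed

lemma stationary_ratios_imp_global_balance:
  assumes "stationary S R P" "\<forall>\<mu>\<in>S. \<forall>\<nu>\<in>S. P \<mu> / P \<nu> = Q \<mu> / Q \<nu>" "finite S" "y \<in> S"
  shows "global_balance S R Q y"
proof -
  obtain c where "c \<noteq> 0" and c: "\<And>x. x \<in> S \<Longrightarrow> Q x = c * P x"
    using stationary_ratios_imp_proportional[OF assms(1,2)] by blast
  have "global_balance S R (\<lambda>x. c * P x) y"
    using assms by (intro global_balance_scale_weight stationary_imp_global_balance)
  moreover have "(\<Sum>x\<in>S - {y}. Q x * R x y) = (\<Sum>x\<in>S - {y}. c * P x * R x y)"
    using c by (intro sum.cong) auto
  ultimately show ?thesis
    using c assms(4) by (simp add: global_balance_def)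
qed

lemma swap_rate_scale:
  "swap_rate n (c * a) (c * b) \<mu> \<nu> = c * swap_rate n a b \<mu> \<nu>"
proof -
  have scale_if: "\<And>P Q. (if P then if Q then c * a else c * b else 0)
      = c * (if P then if Q then a else b else (0::real))"
    by simp
  show ?thesis
    unfolding swap_rate_def scale_if by (simp add: sum_distrib_left distrib_left)
qed

lemma swap_rate_eq_0:
  assumes "\<forall>k<n - 1. \<nu> \<noteq> \<mu>[k := \<mu> ! (k + 1), k + 1 := \<mu> ! k]"
    and "\<nu> \<noteq> \<mu>[0 := \<mu> ! (n - 1), n - 1 := \<mu> ! 0]"
  shows "swap_rate n a b \<mu> \<nu> = 0"
  using assms by (simp add: swap_rate_def)

lemma swap_rate_nonzero_imp_mset_eq:
  assumes "swap_rate n a b \<mu> \<nu> \<noteq> 0" "length \<mu> = n"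
  shows "mset \<nu> = mset \<mu>"
proof -
  consider k where "k < n - 1" "\<nu> = \<mu>[k := \<mu> ! (k + 1), k + 1 := \<mu> ! k]"
    | "\<nu> = \<mu>[0 := \<mu> ! (n - 1), n - 1 := \<mu> ! 0]"
    using assms(1) swap_rate_eq_0 by blast
  then show ?thesis
    using assms(2) by cases (cases n; simp add: mset_swap)+
qed

lemma ASEP_rate_nonzero_imp_mset_eq:
  "ASEP_rate t n \<mu> \<nu> \<noteq> 0 \<Longrightarrow> length \<mu> = n \<Longrightarrow> mset \<nu> = mset \<mu>"
  unfolding ASEP_rate_def by (auto split: if_splits intro: swap_rate_nonzero_imp_mset_eq)

definition DASEP_level_rate :: "real \<Rightarrow> nat \<Rightarrow> nat \<Rightarrow> nat list \<Rightarrow> nat list \<Rightarrow> real" where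
  "DASEP_level_rate u n p \<mu> \<nu> =
    (if \<mu> = \<nu> then 0 else
       \<Sum>k<n. (if 1 \<le> \<mu> ! k \<and> \<mu> ! k \<le> p - 1 \<and> \<nu> = \<mu>[k := \<mu> ! k + 1] then u / (3 * real n) else 0)
            + (if 2 \<le> \<mu> ! k \<and> \<nu> = \<mu>[k := \<mu> ! k - 1] then 1 / (3 * real n) else 0))"

lemma DASEP_rate_split:
  "DASEP_rate t u n p \<mu> \<nu> = ASEP_rate t n \<mu> \<nu> / 3 + DASEP_level_rate u n p \<mu> \<nu>"
proof -
  have "swap_rate n (t / (3 * real n)) (1 / (3 * real n)) \<mu> \<nu>
      = swap_rate n (t / real n) (1 / real n) \<mu> \<nu> / 3"
    using swap_rate_scale[of n "1/3" "t / real n" "1 / real n" \<mu> \<nu>] by simp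
  then show ?thesis
    by (simp add: DASEP_rate_def ASEP_rate_def DASEP_level_rate_def swap_rate_scale)
qed

lemma finite_DASEP_states: "finite (DASEP_states n p q)"
  unfolding DASEP_states_def
  by (rule finite_subset[OF _ finite_lists_length_eq[of "{0..p}" n]]) auto

lemma finite_S_n: "finite (S_n n lam)"
  unfolding S_n_def by (rule finite_subset[OF _ mset_eq_finite[of lam]]) auto

lemma num_nonzero_mset: "num_nonzero \<mu> = size (filter_mset (\<lambda>x. x \<noteq> 0) (mset \<mu>))"
  by (simp flip: mset_filter add: num_nonzero_def)

lemma S_n_subset_DASEP_states:
  assumes "y \<in> DASEP_states n p q"
  shows "S_n n y \<subseteq> DASEP_states n p q"
  using assms unfolding S_n_def DASEP_states_def
  by (auto simp: num_nonzero_mset dest: mset_eq_setD)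

lemma DASEP_level_balance:
  assumes "stationary (DASEP_states n p q) (DASEP_rate t u n p) w"
    and "y \<in> DASEP_states n p q"
    and "global_balance (S_n n y) (ASEP_rate t n) w y"
  shows "global_balance (DASEP_states n p q) (DASEP_level_rate u n p) w y"
proof (rule global_balance_restrict)
  show "finite (DASEP_states n p q)" by (rule finite_DASEP_states)
  show "S_n n y \<subseteq> DASEP_states n p q" using assms(2) by (rule S_n_subset_DASEP_states)
  show "y \<in> S_n n y" using assms(2) by (simp add: S_n_def DASEP_states_def)
  show "DASEP_rate t u n p x z = ASEP_rate t n x z / 3 + DASEP_level_rate u n p x z" for x z
    by (rule DASEP_rate_split)
  show "ASEP_rate t n x y / 3 = 0 \<and> ASEP_rate t n y x / 3 = 0"
    if "x \<in> DASEP_states n p q - S_n n y" for x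
    using that assms(2) ASEP_rate_nonzero_imp_mset_eq[of t n x y] ASEP_rate_nonzero_imp_mset_eq[of t n y x]
    unfolding S_n_def DASEP_states_def by (metis (mono_tags, lifting) DiffE divide_eq_0_iff mem_Collect_eq)
  show "global_balance (DASEP_states n p q) (DASEP_rate t u n p) w y"
    using assms(1) finite_DASEP_states assms(2) by (rule stationary_imp_global_balance)
  show "global_balance (S_n n y) (\<lambda>x z. ASEP_rate t n x z / 3) w y"
    using global_balance_scale_rate[OF assms(3), of "1/3"] by simp
qed

lemma partition_of_DASEP_state:
  assumes "y \<in> DASEP_states n p q" "0 < n"
  shows "is_partition n (rev (sort y))" "rev (sort y) ! 0 \<le> p"
    and "num_nonzero (rev (sort y)) = q" "S_n n (rev (sort y)) = S_n n y"
proof -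
  have y: "length y = n" "set y \<subseteq> {0..p}" "num_nonzero y = q"
    using assms(1) by (auto simp: DASEP_states_def)
  show "is_partition n (rev (sort y))"
    using y(1) by (simp add: is_partition_def sorted_wrt_rev)
  have "rev (sort y) ! 0 \<in> set y"
    using y(1) assms(2) by (metis length_rev length_sort nth_mem set_rev set_sort)
  then show "rev (sort y) ! 0 \<le> p"
    using y(2) by auto
  show "num_nonzero (rev (sort y)) = q"
    using y(3) by (simp add: num_nonzero_mset)
  show "S_n n (rev (sort y)) = S_n n y"
    by (simp add: S_n_def)
qed

lemma stationary_ratios_imp_ASEP_balance:
  assumes stat: "\<forall>lam. is_partition n lam \<and> lam ! 0 \<le> p \<and> num_nonzero lam = q \<longrightarrow>
      stationary (S_n n lam) (ASEP_rate t n) (Pr lam)"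
    and ratios: "\<forall>lam. is_partition n lam \<and> lam ! 0 \<le> p \<and> num_nonzero lam = q \<longrightarrow>
      (\<forall>\<mu>\<in>S_n n lam. \<forall>\<nu>\<in>S_n n lam. Pr lam \<mu> / Pr lam \<nu> = Pd \<mu> / Pd \<nu>)"
    and "y \<in> DASEP_states n p q" "0 < n"
  shows "global_balance (S_n n y) (ASEP_rate t n) Pd y"
proof -
  define lam where "lam = rev (sort y)"
  have lam: "is_partition n lam" "lam ! 0 \<le> p" "num_nonzero lam = q" "S_n n lam = S_n n y"
    unfolding lam_def using assms(3,4) by (rule partition_of_DASEP_state)+
  have "y \<in> S_n n y"
    using assms(3) by (simp add: S_n_def DASEP_states_def)
  with lam stat ratios finite_S_n show ?thesis
    by (metis stationary_ratios_imp_global_balance)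
qed

lemma global_balance_S_n_class:
  assumes "\<And>y. y \<in> DASEP_states n p q \<Longrightarrow> global_balance (S_n n y) (ASEP_rate t n) w y"
    and "lam \<in> DASEP_states n p q" "y \<in> S_n n lam"
  shows "global_balance (S_n n lam) (ASEP_rate t n) w y"
proof -
  have "y \<in> DASEP_states n p q"
    using assms(2,3) S_n_subset_DASEP_states by blast
  moreover have "S_n n y = S_n n lam"
    using assms(3) by (simp add: S_n_def)
  ultimately show ?thesis
    using assms(1) by metis
qed

definition DASEP_3_3_2_states :: "nat list list" where
  "DASEP_3_3_2_states =
    [[0,1,1], [0,1,2], [0,1,3], [0,2,1], [0,2,2], [0,2,3], [0,3,1], [0,3,2], [0,3,3],
     [1,0,1], [1,0,2], [1,0,3], [2,0,1], [2,0,2], [2,0,3], [3,0,1], [3,0,2], [3,0,3],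
     [1,1,0], [1,2,0], [1,3,0], [2,1,0], [2,2,0], [2,3,0], [3,1,0], [3,2,0], [3,3,0]]"

lemma length_3_iff: "length xs = 3 \<longleftrightarrow> (\<exists>a b c. xs = [a, b, c])"
  by (auto simp: numeral_3_eq_3 length_Suc_conv)

lemma set_DASEP_3_3_2_states: "set DASEP_3_3_2_states = DASEP_states 3 3 2"
proof
  show "set DASEP_3_3_2_states \<subseteq> DASEP_states 3 3 2"
    by (simp add: DASEP_3_3_2_states_def DASEP_states_def num_nonzero_def)
  show "DASEP_states 3 3 2 \<subseteq> set DASEP_3_3_2_states"
  proof
    fix x assume "x \<in> DASEP_states 3 3 2"
    then obtain a b c where x: "x = [a, b, c]" "a \<le> 3" "b \<le> 3" "c \<le> 3" "num_nonzero [a, b, c] = 2"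
      by (auto simp: DASEP_states_def length_3_iff)
    have le_3: "\<And>a::nat. a \<le> 3 \<longleftrightarrow> a = 0 \<or> a = 1 \<or> a = 2 \<or> a = 3" by auto
    from x(2-4) x(5) show "x \<in> set DASEP_3_3_2_states"
      unfolding x(1) le_3 by (elim disjE) (simp_all add: DASEP_3_3_2_states_def num_nonzero_def)
  qed
qed

lemma DASEP_level_rate_3_3:
  "DASEP_level_rate u 3 3 [a, b, c] \<nu> = (if [a, b, c] = \<nu> then 0 else
      (if 1 \<le> a \<and> a \<le> 2 \<and> \<nu> = [a + 1, b, c] then u / 9 else 0)
    + (if 2 \<le> a \<and> \<nu> = [a - 1, b, c] then 1 / 9 else 0)
    + (if 1 \<le> b \<and> b \<le> 2 \<and> \<nu> = [a, b + 1, c] then u / 9 else 0)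
    + (if 2 \<le> b \<and> \<nu> = [a, b - 1, c] then 1 / 9 else 0)
    + (if 1 \<le> c \<and> c \<le> 2 \<and> \<nu> = [a, b, c + 1] then u / 9 else 0)
    + (if 2 \<le> c \<and> \<nu> = [a, b, c - 1] then 1 / 9 else 0))"
  by (simp add: DASEP_level_rate_def numeral_3_eq_3 numeral_2_eq_2 algebra_simps)

lemma global_balance_list:
  assumes "distinct L"
  shows "global_balance (set L) R w y \<longleftrightarrow>
    (\<Sum>x\<leftarrow>removeAll y L. w x * R x y) = w y * (\<Sum>z\<leftarrow>removeAll y L. R y z)"
  using assms by (simp add: global_balance_def sum_list_distinct_conv_sum_set distinct_removeAll)

lemma DASEP_3_3_2_level_balance_iff:
  "global_balance (DASEP_states 3 3 2) (DASEP_level_rate u 3 3) w y \<longleftrightarrow>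
    (\<Sum>x\<leftarrow>removeAll y DASEP_3_3_2_states. w x * DASEP_level_rate u 3 3 x y)
      = w y * (\<Sum>z\<leftarrow>removeAll y DASEP_3_3_2_states. DASEP_level_rate u 3 3 y z)"
  unfolding set_DASEP_3_3_2_states[symmetric]
  by (rule global_balance_list) (simp add: DASEP_3_3_2_states_def)

text \<open>
  g a b is the weight of the state whose two nonzero entries are a and b, each moving up at rate u and
  down at rate 1 within {1,2,3}; the premises are the balance equations at the six points off the
  diagonal. The antisymmetric parts d_i of g solve a triangular system whose determinant is positive.
\<close>

lemma grid_birth_death_symmetric:
  fixes u :: real and g :: "nat \<Rightarrow> nat \<Rightarrow> real"
  assumes "0 < u"
    and "(2 * u + 1) * g 1 2 = u * g 1 1 + g 2 2 + g 1 3"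
    and "(2 * u + 1) * g 2 1 = u * g 1 1 + g 2 2 + g 3 1"
    and "(u + 1) * g 1 3 = u * g 1 2 + g 2 3"
    and "(u + 1) * g 3 1 = u * g 2 1 + g 3 2"
    and "(u + 2) * g 2 3 = u * g 1 3 + u * g 2 2 + g 3 3"
    and "(u + 2) * g 3 2 = u * g 3 1 + u * g 2 2 + g 3 3"
  shows "g 1 2 = g 2 1"
proof -
  define d\<^sub>1 d\<^sub>2 d\<^sub>3 where "d\<^sub>1 = g 1 2 - g 2 1" and "d\<^sub>2 = g 1 3 - g 3 1" and "d\<^sub>3 = g 2 3 - g 3 2"
  have d\<^sub>2: "d\<^sub>2 = (2 * u + 1) * d\<^sub>1"
    using assms(2,3) unfolding d\<^sub>1_def d\<^sub>2_def by (simp add: algebra_simps)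
  have d\<^sub>3: "d\<^sub>3 = (u + 1) * d\<^sub>2 - u * d\<^sub>1"
    using assms(4,5) unfolding d\<^sub>1_def d\<^sub>2_def d\<^sub>3_def by (simp add: algebra_simps)
  have "(u + 2) * d\<^sub>3 = u * d\<^sub>2"
    using assms(6,7) unfolding d\<^sub>2_def d\<^sub>3_def by (simp add: algebra_simps)
  then have "(2 * u^3 + 4 * u^2 + 4 * u + 2) * d\<^sub>1 = 0"
    unfolding d\<^sub>3 d\<^sub>2 by (simp add: algebra_simps power2_eq_square power3_eq_cube)
  moreover have "2 * u^3 + 4 * u^2 + 4 * u + 2 > 0"
    using assms(1) by (simp add: add_pos_pos)
  ultimately show ?thesis
    unfolding d\<^sub>1_def by simp
qed

lemma DASEP_3_3_2_level_symmetric: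
  assumes "0 < u"
    and balance: "\<And>y. y \<in> DASEP_states 3 3 2 \<Longrightarrow>
      global_balance (DASEP_states 3 3 2) (DASEP_level_rate u 3 3) w y"
    and e: "e \<in> {\<lambda>a b. [a, b, 0], \<lambda>a b. [a, 0, b], \<lambda>a b. [0, a, b]}"
  shows "w (e 1 2) = w (e 2 1)"
proof (rule grid_birth_death_symmetric[OF assms(1)])
  have balance_at: "(\<Sum>x\<leftarrow>removeAll (e a b) DASEP_3_3_2_states. w x * DASEP_level_rate u 3 3 x (e a b))
      = w (e a b) * (\<Sum>z\<leftarrow>removeAll (e a b) DASEP_3_3_2_states. DASEP_level_rate u 3 3 (e a b) z)"
    if "a \<in> {1, 2, 3}" "b \<in> {1, 2, 3}" for a b
  proof -
    have "e a b \<in> DASEP_states 3 3 2"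
      using that e by (auto simp: DASEP_states_def num_nonzero_def)
    then show ?thesis
      using balance unfolding DASEP_3_3_2_level_balance_iff by blast
  qed
  note compute = DASEP_3_3_2_states_def DASEP_level_rate_3_3 algebra_simps
  show "(2 * u + 1) * w (e 1 2) = u * w (e 1 1) + w (e 2 2) + w (e 1 3)"
    using balance_at[of 1 2] e by (auto simp: compute)
  show "(2 * u + 1) * w (e 2 1) = u * w (e 1 1) + w (e 2 2) + w (e 3 1)"
    using balance_at[of 2 1] e by (auto simp: compute)
  show "(u + 1) * w (e 1 3) = u * w (e 1 2) + w (e 2 3)"
    using balance_at[of 1 3] e by (auto simp: compute)
  show "(u + 1) * w (e 3 1) = u * w (e 2 1) + w (e 3 2)"
    using balance_at[of 3 1] e by (auto simp: compute)
  show "(u + 2) * w (e 2 3) = u * w (e 1 3) + u * w (e 2 2) + w (e 3 3)"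
    using balance_at[of 2 3] e by (auto simp: compute)
  show "(u + 2) * w (e 3 2) = u * w (e 3 1) + u * w (e 2 2) + w (e 3 3)"
    using balance_at[of 3 2] e by (auto simp: compute)
qed

lemma S_n_3_distinct:
  assumes "distinct [a, b, c]"
  shows "S_n 3 [a, b, c] = {[a, b, c], [a, c, b], [b, a, c], [b, c, a], [c, a, b], [c, b, a]}"
proof
  show "{[a, b, c], [a, c, b], [b, a, c], [b, c, a], [c, a, b], [c, b, a]} \<subseteq> S_n 3 [a, b, c]"
    by (auto simp: S_n_def add_mset_commute)
  show "S_n 3 [a, b, c] \<subseteq> {[a, b, c], [a, c, b], [b, a, c], [b, c, a], [c, a, b], [c, b, a]}"
  proof
    fix x assume "x \<in> S_n 3 [a, b, c]"
    then obtain p q r where x: "x = [p, q, r]" "mset [p, q, r] = mset [a, b, c]"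
      by (auto simp: S_n_def length_3_iff)
    have "set [p, q, r] = set [a, b, c]"
      using x(2) by (metis set_mset_mset)
    moreover have "distinct [p, q, r]"
      using x(2) assms by (metis mset_eq_imp_distinct_iff)
    ultimately have "p \<in> {a, b, c}" "q \<in> {a, b, c}" "r \<in> {a, b, c}" "distinct [p, q, r]"
      by auto
    then show "x \<in> {[a, b, c], [a, c, b], [b, a, c], [b, c, a], [c, a, b], [c, b, a]}"
      unfolding x(1) by (simp only: insert_iff empty_iff simp_thms) (elim disjE; simp)
  qed
qed

lemma ASEP_rate_3:
  "ASEP_rate t 3 [a, b, c] \<nu> = (if [a, b, c] = \<nu> then 0 else
      (if a \<noteq> b \<and> \<nu> = [b, a, c] then if a > b then t / 3 else 1 / 3 else 0)
    + (if b \<noteq> c \<and> \<nu> = [a, c, b] then if b > c then t / 3 else 1 / 3 else 0)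
    + (if a \<noteq> c \<and> \<nu> = [c, b, a] then if c > a then t / 3 else 1 / 3 else 0))"
  by (simp add: ASEP_rate_def swap_rate_def numeral_2_eq_2 numeral_3_eq_3)

lemma ASEP_2_1_0_symmetric_imp_vanish:
  assumes "t \<noteq> 1"
    and balance: "\<And>y. y \<in> S_n 3 [2, 1, 0] \<Longrightarrow> global_balance (S_n 3 [2, 1, 0]) (ASEP_rate t 3) w y"
    and sym: "w [1, 2, 0] = w [2, 1, 0]" "w [1, 0, 2] = w [2, 0, 1]" "w [0, 1, 2] = w [0, 2, 1]"
    and x: "x \<in> S_n 3 [2, 1, 0]"
  shows "w x = 0"
proof -
  define L :: "nat list list" where "L = [[2, 1, 0], [2, 0, 1], [1, 2, 0], [1, 0, 2], [0, 2, 1], [0, 1, 2]]"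
  have S: "S_n 3 [2, 1, 0] = set L"
    by (simp add: S_n_3_distinct L_def insert_commute)
  have balance_at: "(\<Sum>x\<leftarrow>removeAll y L. w x * ASEP_rate t 3 x y)
      = w y * (\<Sum>z\<leftarrow>removeAll y L. ASEP_rate t 3 y z)" if "y \<in> set L" for y
  proof -
    have "distinct L" by (simp add: L_def)
    moreover have "global_balance (set L) (ASEP_rate t 3) w y"
      using balance[of y] that unfolding S .
    ultimately show ?thesis by (simp add: global_balance_list)
  qed
  note compute = L_def ASEP_rate_3 algebra_simps
  txt \<open>
    Under the symmetry, the equations at a state mu and at its image under exchanging the nonzero
    entries reduce to one and the same expression being equal to 2 t w(mu) and to 2 w(mu).
  \<close>
  have "w [2, 0, 1] + w [1, 2, 0] + t * w [0, 1, 2] = w [2, 1, 0] + 2 * (t * w [2, 1, 0])"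
    using balance_at[of "[2, 1, 0]"] by (simp add: compute)
  moreover have "t * w [2, 1, 0] + w [1, 0, 2] + t * w [0, 2, 1] = 2 * w [1, 2, 0] + t * w [1, 2, 0]"
    using balance_at[of "[1, 2, 0]"] by (simp add: compute)
  moreover have "t * w [2, 1, 0] + t * w [1, 0, 2] + w [0, 2, 1] = 2 * w [2, 0, 1] + t * w [2, 0, 1]"
    using balance_at[of "[2, 0, 1]"] by (simp add: compute)
  moreover have "w [2, 0, 1] + t * w [1, 2, 0] + w [0, 1, 2] = w [1, 0, 2] + 2 * (t * w [1, 0, 2])"
    using balance_at[of "[1, 0, 2]"] by (simp add: compute)
  moreover have "t * w [2, 0, 1] + w [1, 2, 0] + w [0, 1, 2] = w [0, 2, 1] + 2 * (t * w [0, 2, 1])"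
    using balance_at[of "[0, 2, 1]"] by (simp add: compute)
  moreover have "w [2, 1, 0] + t * w [1, 0, 2] + t * w [0, 2, 1] = 2 * w [0, 1, 2] + t * w [0, 1, 2]"
    using balance_at[of "[0, 1, 2]"] by (simp add: compute)
  ultimately have "(1 - t) * w [2, 1, 0] = 0" "(1 - t) * w [2, 0, 1] = 0" "(1 - t) * w [0, 2, 1] = 0"
    unfolding sym by (simp_all add: algebra_simps)
  then show ?thesis
    using assms(1) x sym unfolding S L_def by auto
qed

theorem mainTheorem2:
  fixes t u :: real and Pd :: "nat list \<Rightarrow> real" and Pr :: "nat list \<Rightarrow> nat list \<Rightarrow> real"
  assumes "0 \<le> t" and "t \<le> 1" and "0 < u"
    and "stationary (DASEP_states 3 3 2) (DASEP_rate t u 3 3) Pd"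
    and "\<forall>lam. is_partition 3 lam \<and> lam ! 0 \<le> 3 \<and> num_nonzero lam = 2 \<longrightarrow>
            stationary (S_n 3 lam) (ASEP_rate t 3) (Pr lam)"
    and "\<forall>lam. is_partition 3 lam \<and> lam ! 0 \<le> 3 \<and> num_nonzero lam = 2 \<longrightarrow>
            (\<forall>mu\<in>S_n 3 lam. \<forall>nu\<in>S_n 3 lam. Pr lam mu / Pr lam nu = Pd mu / Pd nu)"
  shows "t = 1"
proof (rule ccontr)
  assume "t \<noteq> 1"
  have ASEP_balance: "global_balance (S_n 3 y) (ASEP_rate t 3) Pd y" if "y \<in> DASEP_states 3 3 2" for y
    using stationary_ratios_imp_ASEP_balance[OF assms(5,6) that] by simp
  have "global_balance (DASEP_states 3 3 2) (DASEP_level_rate u 3 3) Pd y"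
    if "y \<in> DASEP_states 3 3 2" for y
    using assms(4) that ASEP_balance[OF that] by (rule DASEP_level_balance)
  from DASEP_3_3_2_level_symmetric[OF assms(3) this]
  have sym: "Pd [1, 2, 0] = Pd [2, 1, 0]" "Pd [1, 0, 2] = Pd [2, 0, 1]" "Pd [0, 1, 2] = Pd [0, 2, 1]"
    by auto
  have "[2, 1, 0] \<in> DASEP_states 3 3 2"
    by (simp add: DASEP_states_def num_nonzero_def)
  note ASEP_balance_2_1_0 = global_balance_S_n_class[OF ASEP_balance this]
  have "is_partition 3 [2, 1, 0] \<and> [2, 1, 0] ! 0 \<le> (3::nat) \<and> num_nonzero [2, 1, 0] = 2"
    by (simp add: is_partition_def num_nonzero_def)
  then obtain x where "x \<in> S_n 3 [2, 1, 0]" "Pd x \<noteq> 0"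
    using stationary_ratios_imp_nonvanishing assms(5,6) by metis
  with ASEP_2_1_0_symmetric_imp_vanish[OF \<open>t \<noteq> 1\<close> ASEP_balance_2_1_0 sym] show False
    by blast
qed

end
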